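(* With $\Omega=\{D\}$, $\lambda\in K$, $\mathfrak{S}(X)$ ordered by order $(2)$, and $S=\{D(xy)-D(x)y-xD(y)-\lambda D(x)D(y)\mid x,y\in\mathfrak{S}(X)\}$, we have $Irr(S)=S(D^\omega(X))$, and this set is a $K$-basis of $K\langle X;D|S\rangle=K\langle X;D\rangle/Id(S)$.
   Context: $K$ is a commutative ring with unit, $X$ a well-ordered set, $S(Y)$ the free semigroup on $Y$. $\mathfrak{S}_0=S(X)$, $\mathfrak{S}_n=S(X\cup\{D(u)\mid u\in\mathfrak{S}_{n-1}\})$, $\mathfrak{S}(X)=\bigcup_n\mathfrak{S}_n$; $K\langle X;D\rangle$ is the free $K$-module on $\mathfrak{S}(X)$ with concatenation product and $D$ extended linearly. $\mathfrak{S}^\star(X)$: words on $X\cup\{\star\}$ with exactly one $\star$, $u|_s$ substitution; $Id(S)$ is the $K$-span of all $u|_s$, $s\in S$. $Irr(S)=\{w\in\mathfrak{S}(X)\mid w\ne u|_{\bar s}\ \forall u\in\mathfrak{S}^\star(X),s\in S\}$ with $\bar s$ the leading word. Order (2): write $u=u_1\cdots u_n$ with $u_i\in X\cup D(\mathfrak{S}(X))$, $deg_X(u)$ = number of occurrences of letters of $X$, $wt(u)=(deg_X(u),u_1,\dots,u_n)$, $u>v$ iff $wt(u)>wt(v)$ lexicographically, primes compared by: order of $X$ on letters; $D(u')>x$ for $x\in X$; $D(u')>D(v')$ iff $u'>v'$. $D^\omega(X)=\{D^i(x)\mid i\ge0,x\in X\}$ with $D^0(x)=x$. *)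

theory Defs
  imports Main "HOL-Library.Poly_Mapping"
begin

text \<open>A letter is either a letter of X or D(u) for a word u.
  The elements of \<open>\<frak>S(X)\<close> are the well-formed words: nonempty, with all bracketed
  subwords nonempty.\<close>

datatype 'a letter = Var 'a | Op "'a letter list"

fun wf_letter :: "'a letter \<Rightarrow> bool" where
  "wf_letter (Var x) = True"
| "wf_letter (Op v) = (v \<noteq> [] \<and> (\<forall>l\<in>set v. wf_letter l))"

definition wf_word :: "'a letter list \<Rightarrow> bool" where
  "wf_word w \<longleftrightarrow> w \<noteq> [] \<and> (\<forall>l\<in>set w. wf_letter l)"

primrec deg_letter :: "'a letter \<Rightarrow> nat" where
  "deg_letter (Var x) = 1"
| "deg_letter (Op v) = sum_list (map deg_letter v)"

definition deg_word :: "'a letter list \<Rightarrow> nat" where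
  "deg_word w = sum_list (map deg_letter w)"

section \<open>Order (2)\<close>

inductive word_less :: "'a::linorder letter list \<Rightarrow> 'a letter list \<Rightarrow> bool"
  and lex_less :: "'a letter list \<Rightarrow> 'a letter list \<Rightarrow> bool"
  and letter_less :: "'a letter \<Rightarrow> 'a letter \<Rightarrow> bool" where
  wl_deg: "deg_word u < deg_word v \<Longrightarrow> word_less u v"
| wl_lex: "deg_word u = deg_word v \<Longrightarrow> lex_less u v \<Longrightarrow> word_less u v"
| lx_nil: "lex_less [] (b # v)"
| lx_head: "letter_less a b \<Longrightarrow> lex_less (a # u) (b # v)"
| lx_tail: "lex_less u v \<Longrightarrow> lex_less (a # u) (a # v)"
| ll_var: "x < y \<Longrightarrow> letter_less (Var x) (Var y)"
| ll_var_op: "letter_less (Var x) (Op u)"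
| ll_op: "word_less u v \<Longrightarrow> letter_less (Op u) (Op v)"

section \<open>The module K<X;D>: finitely supported K-valued functions on words\<close>

type_synonym ('a, 'k) opoly = "'a letter list \<Rightarrow>\<^sub>0 'k"

definition mono :: "'a letter list \<Rightarrow> ('a, 'k::comm_ring_1) opoly" where
  "mono w = Poly_Mapping.single w 1"

definition is_opoly :: "('a, 'k::comm_ring_1) opoly \<Rightarrow> bool" where
  "is_opoly f \<longleftrightarrow> (\<forall>w\<in>Poly_Mapping.keys f. wf_word w)"

definition smult :: "'k \<Rightarrow> ('a, 'k::comm_ring_1) opoly \<Rightarrow> ('a, 'k) opoly" where
  "smult c f = Poly_Mapping.map (\<lambda>a. c * a) f"

definition pmul :: "('a, 'k::comm_ring_1) opoly \<Rightarrow> ('a, 'k) opoly \<Rightarrow> ('a, 'k) opoly" where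
  "pmul f g = (\<Sum>u\<in>Poly_Mapping.keys f. \<Sum>v\<in>Poly_Mapping.keys g. Poly_Mapping.single (u @ v) (Poly_Mapping.lookup f u * Poly_Mapping.lookup g v))"

definition pD :: "('a, 'k::comm_ring_1) opoly \<Rightarrow> ('a, 'k) opoly" where
  "pD f = (\<Sum>u\<in>Poly_Mapping.keys f. Poly_Mapping.single [Op u] (Poly_Mapping.lookup f u))"

text \<open>Star words are words over X \<union> {\<star>}, encoded with letters in \<open>'a option\<close>,
  \<open>Var None\<close> being \<star>; they must contain exactly one \<star> (anywhere, also inside brackets).\<close>

primrec star_count_letter :: "'a option letter \<Rightarrow> nat" where
  "star_count_letter (Var x) = (case x of None \<Rightarrow> 1 | Some _ \<Rightarrow> 0)"
| "star_count_letter (Op v) = sum_list (map star_count_letter v)"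

definition star_word :: "'a option letter list \<Rightarrow> bool" where
  "star_word u \<longleftrightarrow> wf_word u \<and> sum_list (map star_count_letter u) = 1"

primrec subst_letter :: "'a letter list \<Rightarrow> 'a option letter \<Rightarrow> 'a letter list" where
  "subst_letter w (Var x) = (case x of None \<Rightarrow> w | Some y \<Rightarrow> [Var y])"
| "subst_letter w (Op v) = [Op (concat (map (subst_letter w) v))]"

definition subst :: "'a option letter list \<Rightarrow> 'a letter list \<Rightarrow> 'a letter list" where
  "subst u w = concat (map (subst_letter w) u)"

definition subst_poly :: "'a option letter list \<Rightarrow> ('a, 'k::comm_ring_1) opoly \<Rightarrow> ('a, 'k) opoly" where
  "subst_poly u s = (\<Sum>w\<in>Poly_Mapping.keys s. Poly_Mapping.single (subst u w) (Poly_Mapping.lookup s w))"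

inductive_set Id_set :: "('a, 'k::comm_ring_1) opoly set \<Rightarrow> ('a, 'k) opoly set"
  for S where
  id_zero: "0 \<in> Id_set S"
| id_add: "f \<in> Id_set S \<Longrightarrow> g \<in> Id_set S \<Longrightarrow> f + g \<in> Id_set S"
| id_smult: "f \<in> Id_set S \<Longrightarrow> smult c f \<in> Id_set S"
| id_gen: "star_word u \<Longrightarrow> s \<in> S \<Longrightarrow> subst_poly u s \<in> Id_set S"

definition lead :: "('a::linorder, 'k::comm_ring_1) opoly \<Rightarrow> 'a letter list" where
  "lead s = (THE w. w \<in> Poly_Mapping.keys s \<and> (\<forall>v\<in>Poly_Mapping.keys s. v \<noteq> w \<longrightarrow> word_less v w))"

definition Irr :: "('a::linorder, 'k::comm_ring_1) opoly set \<Rightarrow> 'a letter list set" where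
  "Irr S = {w. wf_word w \<and> (\<forall>u s. star_word u \<longrightarrow> s \<in> S \<longrightarrow> w \<noteq> subst u (lead s))}"

inductive Dpow :: "'a letter \<Rightarrow> bool" where
  "Dpow (Var x)"
| "Dpow l \<Longrightarrow> Dpow (Op [l])"

definition SDomega :: "'a letter list set" where
  "SDomega = {w. w \<noteq> [] \<and> (\<forall>l\<in>set w. Dpow l)}"

definition S_diff :: "'k \<Rightarrow> ('a, 'k::comm_ring_1) opoly set" where
  "S_diff lam = {pD (pmul (mono x) (mono y)) - pmul (pD (mono x)) (mono y)
                   - pmul (mono x) (pD (mono y)) - smult lam (pmul (pD (mono x)) (pD (mono y)))
                 | x y. wf_word x \<and> wf_word y}"

end

theory Submission
  imports Defs
begin

(* Let d be the lambda-derivation of the free algebra K S(D^omega(X)) on the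
   letters D^i(x) determined by d(l) = D(l) for every letter l; its linear extension dpoly
   satisfies the lambda-Leibniz rule.  The normal form map nf : K<X;D> -> K S(D^omega(X)) is
   the algebra map fixing X and sending D(u) to dpoly (nf u).  Then
   (1) nf vanishes on Id(S): it kills every generator of S (the lambda-Leibniz rule) and is
       compatible with substitution into star words, which behave linearly in the star;
   (2) f - nf f lies in Id(S) for every f, by induction on words, since modulo Id(S) the
       operator D acts on words in D^omega(X) as the lambda-derivation;
   (3) nf is the identity on polynomials supported in S(D^omega(X)).
   Together these make S(D^omega(X)) a K-basis of the quotient.  Independently, the leading
   word of the relation for x, y is D(xy) under order (2), so the reducible words are exactly
   those containing D applied to a word of length at least two, whence Irr(S) = S(D^omega(X)). *)

text \<open>Words form a monoid under concatenation, so the polynomial mappings on words form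
  the monoid algebra, whose product is \<open>pmul\<close>.\<close>
instantiation list :: (type) monoid_add
begin
definition plus_list :: "'a list \<Rightarrow> 'a list \<Rightarrow> 'a list" where "plus_list xs ys = xs @ ys"
definition zero_list :: "'a list" where "zero_list = []"
instance by standard (auto simp: plus_list_def zero_list_def)
end

lemma single_mult_single:
  "Poly_Mapping.single u a * Poly_Mapping.single v b = Poly_Mapping.single (u @ v) (a * b)"
  by (simp add: mult_single plus_list_def)

lemma poly_mapping_expand:
  "(p :: 'b \<Rightarrow>\<^sub>0 'c::comm_monoid_add) = (\<Sum>k\<in>Poly_Mapping.keys p. Poly_Mapping.single k (Poly_Mapping.lookup p k))"
proof (rule poly_mapping_eqI)
  fix j
  have "(\<Sum>k\<in>Poly_Mapping.keys p. Poly_Mapping.lookup p k when k = j) = Poly_Mapping.lookup p j"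
    by (cases "j \<in> Poly_Mapping.keys p") (auto simp: when_def in_keys_iff)
  then show "Poly_Mapping.lookup p j
      = Poly_Mapping.lookup (\<Sum>k\<in>Poly_Mapping.keys p. Poly_Mapping.single k (Poly_Mapping.lookup p k)) j"
    by (simp add: lookup_sum lookup_single)
qed

lemma smult_conv_mult: "smult c p = Poly_Mapping.single [] c * p"
  unfolding smult_def zero_list_def[symmetric] by (rule mult_map_scale_conv_mult)

lemma single_Nil_central:
  "Poly_Mapping.single [] c * (p :: ('a, 'k::comm_ring_1) opoly) = p * Poly_Mapping.single [] c"
proof -
  have "Poly_Mapping.single [] c * p
      = (\<Sum>k\<in>Poly_Mapping.keys p. Poly_Mapping.single [] c * Poly_Mapping.single k (Poly_Mapping.lookup p k))"
    by (subst poly_mapping_expand[of p]) (simp add: sum_distrib_left)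
  also have "\<dots> = (\<Sum>k\<in>Poly_Mapping.keys p. Poly_Mapping.single k (Poly_Mapping.lookup p k) * Poly_Mapping.single [] c)"
    by (simp add: single_mult_single mult.commute)
  also have "\<dots> = p * Poly_Mapping.single [] c"
    by (subst (2) poly_mapping_expand[of p]) (simp add: sum_distrib_right)
  finally show ?thesis .
qed

lemma smult_mult_left: "smult c p * q = smult c (p * q)"
  by (simp add: smult_conv_mult mult.assoc)

lemma smult_mult_right: "p * smult c q = smult c (p * (q :: ('a, 'k::comm_ring_1) opoly))"
  by (simp add: smult_conv_mult mult.assoc[symmetric] flip: single_Nil_central)

lemma smult_smult: "smult a (smult b p) = smult (a * b) p"
  by (simp add: smult_conv_mult mult.assoc[symmetric] single_mult_single)

lemma smult_add: "smult c (p + q) = smult c p + smult c q"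
  by (simp add: smult_conv_mult distrib_left)

lemma smult_diff: "smult c (p - q) = smult c p - smult c q"
  by (simp add: smult_conv_mult right_diff_distrib)

lemma smult_zero [simp]: "smult c 0 = 0" "smult 0 p = 0"
  by (simp_all add: smult_conv_mult)

lemma smult_one [simp]: "smult 1 p = p"
  by (simp add: smult_conv_mult zero_list_def[symmetric])

lemma smult_add_scalar: "smult (a + b) p = smult a p + smult b p"
  by (simp add: smult_conv_mult single_add distrib_right)

lemma smult_sum: "smult c (\<Sum>a\<in>A. g a) = (\<Sum>a\<in>A. smult c (g a))"
  by (simp add: smult_conv_mult sum_distrib_left)

lemma lookup_smult: "Poly_Mapping.lookup (smult c p) u = c * Poly_Mapping.lookup p u"
  by (simp add: smult_def Poly_Mapping.map.rep_eq when_def)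

lemma keys_smult: "Poly_Mapping.keys (smult c p) \<subseteq> Poly_Mapping.keys p"
  by (auto simp: in_keys_iff lookup_smult)

lemma smult_mono: "smult c (mono u) = Poly_Mapping.single u c"
  by (simp add: smult_conv_mult mono_def single_mult_single)

lemma pmul_eq_mult: "pmul f g = f * (g :: ('a, 'k::comm_ring_1) opoly)"
proof -
  have "f * g = (\<Sum>u\<in>Poly_Mapping.keys f. Poly_Mapping.single u (Poly_Mapping.lookup f u))
              * (\<Sum>v\<in>Poly_Mapping.keys g. Poly_Mapping.single v (Poly_Mapping.lookup g v))"
    by (simp flip: poly_mapping_expand)
  then show ?thesis
    by (simp add: pmul_def sum_distrib_left sum_distrib_right single_mult_single sum.swap[of _ "Poly_Mapping.keys f"])
qed

lemma mono_mult: "mono u * mono v = mono (u @ v)"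
  by (simp add: mono_def single_mult_single)

lemma mono_Nil: "mono [] = 1"
  by (simp add: mono_def zero_list_def[symmetric])

lemma keys_mono: "Poly_Mapping.keys (mono w :: ('a, 'k::comm_ring_1) opoly) = {w}"
  by (simp add: mono_def)

definition lin :: "('b \<Rightarrow> ('a, 'k::comm_ring_1) opoly) \<Rightarrow> ('b \<Rightarrow>\<^sub>0 'k) \<Rightarrow> ('a, 'k) opoly" where
  "lin F f = (\<Sum>u\<in>Poly_Mapping.keys f. smult (Poly_Mapping.lookup f u) (F u))"

definition is_linear :: "(('a, 'k::comm_ring_1) opoly \<Rightarrow> ('b, 'k) opoly) \<Rightarrow> bool" where
  "is_linear L \<longleftrightarrow> (\<forall>p q. L (p + q) = L p + L q) \<and> (\<forall>c p. L (smult c p) = smult c (L p))"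

lemma is_linearI:
  "(\<And>p q. L (p + q) = L p + L q) \<Longrightarrow> (\<And>c p. L (smult c p) = smult c (L p)) \<Longrightarrow> is_linear L"
  by (simp add: is_linear_def)

lemma linear_add: "is_linear L \<Longrightarrow> L (p + q) = L p + L q"
  and linear_smult: "is_linear L \<Longrightarrow> L (smult c p) = smult c (L p)"
  by (simp_all add: is_linear_def)

lemma linear_zero: "is_linear L \<Longrightarrow> L 0 = 0"
  using linear_smult[of L 0 0] by simp

lemma linear_diff: "is_linear L \<Longrightarrow> L (p - q) = L p - L q"
  using linear_add[of L "p - q" q] by (simp add: eq_diff_eq)

lemma linear_sum: "is_linear L \<Longrightarrow> L (\<Sum>a\<in>A. g a) = (\<Sum>a\<in>A. L (g a))"
  by (induction A rule: infinite_finite_induct) (simp_all add: linear_zero linear_add)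

lemma lin_superset:
  assumes "finite A" "Poly_Mapping.keys f \<subseteq> A"
  shows "lin F f = (\<Sum>u\<in>A. smult (Poly_Mapping.lookup f u) (F u))"
  unfolding lin_def by (rule sum.mono_neutral_left) (use assms in \<open>auto simp: in_keys_iff\<close>)

lemma is_linear_lin:
  fixes F :: "'a letter list \<Rightarrow> ('b, 'k::comm_ring_1) opoly"
  shows "is_linear (lin F)"
proof (rule is_linearI)
  fix f g :: "('a, 'k::comm_ring_1) opoly"
  let ?A = "Poly_Mapping.keys f \<union> Poly_Mapping.keys g"
  have "lin F (f + g) = (\<Sum>u\<in>?A. smult (Poly_Mapping.lookup (f + g) u) (F u))"
    by (rule lin_superset) (auto simp: keys_add)
  also have "\<dots> = (\<Sum>u\<in>?A. smult (Poly_Mapping.lookup f u) (F u)) + (\<Sum>u\<in>?A. smult (Poly_Mapping.lookup g u) (F u))"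
    by (simp add: lookup_add smult_add_scalar sum.distrib)
  also have "\<dots> = lin F f + lin F g"
    by (simp add: lin_superset[of ?A])
  finally show "lin F (f + g) = lin F f + lin F g" .
next
  fix c and f :: "('a, 'k::comm_ring_1) opoly"
  have "lin F (smult c f) = (\<Sum>u\<in>Poly_Mapping.keys f. smult (Poly_Mapping.lookup (smult c f) u) (F u))"
    by (rule lin_superset) (auto simp: in_keys_iff lookup_smult)
  then show "lin F (smult c f) = smult c (lin F f)"
    by (simp add: lin_def lookup_smult smult_smult smult_sum)
qed

lemma lin_mono: "lin F (mono u) = F u"
  by (simp add: lin_def mono_def)

lemma lin_cong: "(\<And>u. u \<in> Poly_Mapping.keys f \<Longrightarrow> F u = G u) \<Longrightarrow> lin F f = lin G f"
  by (simp add: lin_def)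

lemma lin_mono_id: "lin mono f = f"
  unfolding lin_def smult_mono by (rule poly_mapping_expand[symmetric])

lemma lin_fun_diff: "lin (\<lambda>w. F w - G w) f = lin F f - lin G f"
  by (simp add: lin_def smult_diff sum_subtractf)

lemma linear_eq_lin:
  assumes "is_linear L"
  shows "L f = lin (\<lambda>u. L (mono u)) f"
proof -
  have "L f = L (lin mono f)" by (simp add: lin_mono_id)
  also have "\<dots> = lin (\<lambda>u. L (mono u)) f"
    by (simp add: lin_def linear_sum[OF assms] linear_smult[OF assms])
  finally show ?thesis .
qed

lemma linear_eqI:
  assumes "is_linear L" "is_linear M" "\<And>u. L (mono u) = M (mono u)"
  shows "L f = M f"
proof -
  have "L f = lin (\<lambda>u. L (mono u)) f" by (rule linear_eq_lin[OF assms(1)])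
  also have "\<dots> = lin (\<lambda>u. M (mono u)) f" by (simp add: assms(3))
  also have "\<dots> = M f" by (rule linear_eq_lin[OF assms(2), symmetric])
  finally show ?thesis .
qed

lemma lin_compose:
  assumes "is_linear L"
  shows "L (lin F f) = lin (\<lambda>w. L (F w)) f"
  by (simp add: lin_def linear_sum[OF assms] linear_smult[OF assms])

lemma keys_lin: "Poly_Mapping.keys (lin F f) \<subseteq> (\<Union>u\<in>Poly_Mapping.keys f. Poly_Mapping.keys (F u))"
proof -
  have "Poly_Mapping.keys (lin F f)
      \<subseteq> (\<Union>u\<in>Poly_Mapping.keys f. Poly_Mapping.keys (smult (Poly_Mapping.lookup f u) (F u)))"
    unfolding lin_def by (rule keys_sum)
  then show ?thesis using keys_smult by blast
qed

lemma pD_eq_lin: "pD f = lin (\<lambda>u. mono [Op u]) f"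
  by (simp add: pD_def lin_def smult_mono)

lemma is_linear_pD: "is_linear pD"
  by (simp add: pD_eq_lin[abs_def] is_linear_lin)

lemma pD_mono: "pD (mono u) = mono [Op u]"
  by (simp add: pD_eq_lin lin_mono)

lemma subst_poly_eq_lin: "subst_poly u s = lin (\<lambda>w. mono (subst u w)) s"
  by (simp add: subst_poly_def lin_def smult_mono)

section \<open>The \<open>\<lambda>\<close>-derivation on \<open>K S(D\<^sup>\<omega>(X))\<close>\<close>

text \<open>\<open>dword lam w\<close> is the \<open>\<lambda>\<close>-derivative of a word, determined by \<open>d(l) = D(l)\<close> on letters
  and the rule \<open>d(l w) = d(l) w + l d(w) + \<lambda> d(l) d(w)\<close>; it is meant for words in
  \<open>D\<^sup>\<omega>(X)\<close>, where \<open>D(l)\<close> is again a letter of \<open>D\<^sup>\<omega>(X)\<close>.\<close>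
fun dword :: "'k::comm_ring_1 \<Rightarrow> 'a letter list \<Rightarrow> ('a, 'k) opoly" where
  "dword lam [] = 0"
| "dword lam (l # w) = mono [Op [l]] * mono w + mono [l] * dword lam w
                       + smult lam (mono [Op [l]] * dword lam w)"

definition dpoly :: "'k::comm_ring_1 \<Rightarrow> ('a, 'k) opoly \<Rightarrow> ('a, 'k) opoly" where
  "dpoly lam = lin (dword lam)"

text \<open>The ring identity behind the Leibniz rule for \<open>dword\<close>: the inductive step from
  \<open>u\<close> to \<open>l # u\<close>, with \<open>X\<close> playing the role of the central scalar \<open>\<lambda>\<close>.\<close>
lemma lambda_leibniz_step:
  fixes A L U V du dv X :: "'r::ring"
  assumes central: "\<And>z. z * X = X * z"
  shows "A * (U * V) + L * (du * V + U * dv + X * (du * dv)) + X * (A * (du * V + U * dv + X * (du * dv)))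
    = (A * U + L * du + X * (A * du)) * V + (L * U) * dv + X * ((A * U + L * du + X * (A * du)) * dv)"
proof -
  have "A * (X * w) = X * (A * w)" "L * (X * w) = X * (L * w)" for w
    by (simp_all add: mult.assoc[symmetric] central)
  then show ?thesis by (simp add: distrib_left distrib_right mult.assoc add_ac)
qed

lemma dword_append:
  "dword lam (u @ v) = dword lam u * mono v + mono u * dword lam v + smult lam (dword lam u * dword lam v)"
proof (induction u)
  case Nil
  then show ?case by (simp add: mono_Nil)
next
  case (Cons l u)
  have mono_split: "mono (l # u) = mono [l] * mono u" "mono (u @ v) = mono u * mono v"
    by (simp_all add: mono_mult)
  show ?case
    unfolding append_Cons dword.simps Cons smult_conv_mult mono_split
    by (rule lambda_leibniz_step[OF single_Nil_central[symmetric]])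
qed

lemma is_linear_dpoly: "is_linear (dpoly lam)"
  by (simp add: dpoly_def is_linear_lin)

lemma dpoly_mono: "dpoly lam (mono w) = dword lam w"
  by (simp add: dpoly_def lin_mono)

lemmas dpoly_add = linear_add[OF is_linear_dpoly]
  and dpoly_smult = linear_smult[OF is_linear_dpoly]

text \<open>The linear extension of \<open>dword\<close> is a \<open>\<lambda>\<close>-derivation of the whole algebra;
  both sides are linear in each factor, so it suffices to check monomials, where it is
  \<open>dword_append\<close>.\<close>
lemma dpoly_mult:
  "dpoly lam (f * g) = dpoly lam f * g + f * dpoly lam g + smult lam (dpoly lam f * dpoly lam g)"
proof -
  have mono_left: "dpoly lam (mono u * g)
      = dpoly lam (mono u) * g + mono u * dpoly lam g + smult lam (dpoly lam (mono u) * dpoly lam g)" for u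
  proof -
    let ?L = "\<lambda>g. dpoly lam (mono u * g)"
    let ?M = "\<lambda>g. dpoly lam (mono u) * g + mono u * dpoly lam g + smult lam (dpoly lam (mono u) * dpoly lam g)"
    show ?thesis
    proof (rule linear_eqI[where L = ?L and M = ?M])
      show "is_linear ?L"
        by (simp add: is_linear_def distrib_left dpoly_add smult_mult_right dpoly_smult)
      show "is_linear ?M"
        by (simp add: is_linear_def distrib_left dpoly_add smult_add smult_mult_right dpoly_smult
            add_ac smult_smult mult.commute)
      show "?L (mono v) = ?M (mono v)" for v
        by (simp add: mono_mult dpoly_mono dword_append)
    qed
  qed
  let ?L = "\<lambda>f. dpoly lam (f * g)"
  let ?M = "\<lambda>f. dpoly lam f * g + f * dpoly lam g + smult lam (dpoly lam f * dpoly lam g)"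
  show ?thesis
  proof (rule linear_eqI[where L = ?L and M = ?M])
    show "is_linear ?L"
      by (simp add: is_linear_def distrib_right dpoly_add smult_mult_left dpoly_smult)
    show "is_linear ?M"
      by (simp add: is_linear_def distrib_right dpoly_add smult_add smult_mult_left dpoly_smult
          add_ac smult_smult mult.commute)
  qed (rule mono_left)
qed

section \<open>The normal form map\<close>

fun nf_letter :: "'k::comm_ring_1 \<Rightarrow> 'a letter \<Rightarrow> ('a, 'k) opoly"
and nf_word :: "'k::comm_ring_1 \<Rightarrow> 'a letter list \<Rightarrow> ('a, 'k) opoly" where
  "nf_letter lam (Var x) = mono [Var x]"
| "nf_letter lam (Op v) = dpoly lam (nf_word lam v)"
| "nf_word lam [] = 1"
| "nf_word lam (l # w) = nf_letter lam l * nf_word lam w"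

definition nf :: "'k::comm_ring_1 \<Rightarrow> ('a, 'k) opoly \<Rightarrow> ('a, 'k) opoly" where
  "nf lam = lin (nf_word lam)"

lemma nf_word_append: "nf_word lam (u @ v) = nf_word lam u * nf_word lam v"
  by (induction u) (simp_all add: mult.assoc)

lemma is_linear_nf: "is_linear (nf lam)"
  by (simp add: nf_def is_linear_lin)

lemma nf_mono: "nf lam (mono w) = nf_word lam w"
  by (simp add: nf_def lin_mono)

lemmas nf_add = linear_add[OF is_linear_nf]
  and nf_smult = linear_smult[OF is_linear_nf]
  and nf_diff = linear_diff[OF is_linear_nf]

text \<open>\<open>nf\<close> is multiplicative: both sides are bilinear and agree on pairs of monomials.\<close>
lemma nf_mult: "nf lam (f * g) = nf lam f * nf lam g"
proof -
  have mono_left: "nf lam (mono u * g) = nf lam (mono u) * nf lam g" for u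
    by (rule linear_eqI[where L = "\<lambda>g. nf lam (mono u * g)" and M = "\<lambda>g. nf lam (mono u) * nf lam g"])
      (simp_all add: is_linear_def distrib_left nf_add smult_mult_right nf_smult mono_mult nf_mono
        nf_word_append)
  show ?thesis
    by (rule linear_eqI[where L = "\<lambda>f. nf lam (f * g)" and M = "\<lambda>f. nf lam f * nf lam g"])
      (simp_all add: is_linear_def distrib_right nf_add smult_mult_left nf_smult mono_left)
qed

lemma nf_pD: "nf lam (pD p) = dpoly lam (nf lam p)"
  by (rule linear_eqI[where L = "\<lambda>p. nf lam (pD p)" and M = "\<lambda>p. dpoly lam (nf lam p)"])
    (simp_all add: is_linear_def linear_add[OF is_linear_pD] linear_smult[OF is_linear_pD] nf_add
      nf_smult dpoly_add dpoly_smult pD_mono nf_mono)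

text \<open>Hence \<open>nf\<close> kills the defining relations, which are exactly the \<open>\<lambda>\<close>-Leibniz rule for \<open>D\<close>.\<close>
lemma nf_S_diff: "s \<in> S_diff lam \<Longrightarrow> nf lam s = 0"
  by (auto simp: S_diff_def pmul_eq_mult nf_diff nf_pD nf_mult nf_smult dpoly_mult)

section \<open>The normal form map vanishes on \<open>Id(S)\<close>\<close>

text \<open>\<open>ctx_word lam p u\<close> evaluates the star word \<open>u\<close> in normal-form semantics with the
  star replaced by the polynomial \<open>p\<close>.\<close>

fun ctx_letter :: "'k::comm_ring_1 \<Rightarrow> ('a, 'k) opoly \<Rightarrow> 'a option letter \<Rightarrow> ('a, 'k) opoly"
and ctx_word :: "'k::comm_ring_1 \<Rightarrow> ('a, 'k) opoly \<Rightarrow> 'a option letter list \<Rightarrow> ('a, 'k) opoly" where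
  "ctx_letter lam p (Var x) = (case x of None \<Rightarrow> p | Some y \<Rightarrow> mono [Var y])"
| "ctx_letter lam p (Op v) = dpoly lam (ctx_word lam p v)"
| "ctx_word lam p [] = 1"
| "ctx_word lam p (l # v) = ctx_letter lam p l * ctx_word lam p v"

lemma nf_word_subst_letters:
  "(\<And>l. l \<in> set u \<Longrightarrow> nf_word lam (subst_letter w l) = ctx_letter lam (nf_word lam w) l)
    \<Longrightarrow> nf_word lam (concat (map (subst_letter w) u)) = ctx_word lam (nf_word lam w) u"
  by (induction u) (simp_all add: nf_word_append)

lemma nf_word_subst_letter: "nf_word lam (subst_letter w l) = ctx_letter lam (nf_word lam w) l"
proof (induction l)
  case (Var x)
  then show ?case by (cases x) simp_all
next
  case (Op v)
  then show ?case using nf_word_subst_letters[of v lam w] by simp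
qed

lemma nf_word_subst: "nf_word lam (subst u w) = ctx_word lam (nf_word lam w) u"
  unfolding subst_def by (rule nf_word_subst_letters) (rule nf_word_subst_letter)

definition hole_form :: "nat \<Rightarrow> (('a, 'k::comm_ring_1) opoly \<Rightarrow> ('a, 'k) opoly) \<Rightarrow> bool" where
  "hole_form n F \<longleftrightarrow> (n = 0 \<longrightarrow> (\<forall>p. F p = F 0)) \<and> (n = 1 \<longrightarrow> is_linear F)"

lemma hole_form_mult:
  assumes "hole_form m F" "hole_form n G"
  shows "hole_form (m + n) (\<lambda>p. F p * G p)"
proof -
  have "is_linear (\<lambda>p. F p * G p)" if "m + n = 1"
  proof -
    from that consider "m = 1" "n = 0" | "m = 0" "n = 1" by linarith
    then show ?thesis
    proof cases
      case 1
      then have F: "is_linear F" and G: "\<And>p. G p = G 0" using assms unfolding hole_form_def by blast+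
      show ?thesis
      proof (rule is_linearI)
        show "F (p + q) * G (p + q) = F p * G p + F q * G q" for p q
          using G[of "p + q"] G[of p] G[of q] by (simp add: linear_add[OF F] distrib_right)
        show "F (smult c p) * G (smult c p) = smult c (F p * G p)" for c p
          using G[of "smult c p"] G[of p] by (simp add: linear_smult[OF F] smult_mult_left)
      qed
    next
      case 2
      then have G: "is_linear G" and F: "\<And>p. F p = F 0" using assms unfolding hole_form_def by blast+
      show ?thesis
      proof (rule is_linearI)
        show "F (p + q) * G (p + q) = F p * G p + F q * G q" for p q
          using F[of "p + q"] F[of p] F[of q] by (simp add: linear_add[OF G] distrib_left)
        show "F (smult c p) * G (smult c p) = smult c (F p * G p)" for c p
          using F[of "smult c p"] F[of p] by (simp add: linear_smult[OF G] smult_mult_right)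
      qed
    qed
  qed
  moreover have "F p * G p = F 0 * G 0" if "m + n = 0" for p
  proof -
    from that have "m = 0" "n = 0" by simp_all
    with assms have "\<forall>p. F p = F 0" "\<forall>p. G p = G 0" unfolding hole_form_def by blast+
    then show ?thesis by metis
  qed
  ultimately show ?thesis unfolding hole_form_def by blast
qed

lemma hole_form_dpoly: "hole_form n F \<Longrightarrow> hole_form n (\<lambda>p. dpoly lam (F p))"
  unfolding hole_form_def is_linear_def by (metis dpoly_add dpoly_smult)

lemma hole_form_ctx_letters:
  "(\<And>l. l \<in> set u \<Longrightarrow> hole_form (star_count_letter l) (\<lambda>p. ctx_letter lam p l))
    \<Longrightarrow> hole_form (sum_list (map star_count_letter u)) (\<lambda>p. ctx_word lam p u)"
proof (induction u)
  case Nil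
  then show ?case by (simp add: hole_form_def)
next
  case (Cons l v)
  then have "hole_form (star_count_letter l + sum_list (map star_count_letter v))
      (\<lambda>p. ctx_letter lam p l * ctx_word lam p v)"
    by (intro hole_form_mult) auto
  then show ?case by simp
qed

lemma hole_form_ctx_letter: "hole_form (star_count_letter l) (\<lambda>p. ctx_letter lam p l)"
proof (induction l)
  case (Var x)
  then show ?case by (cases x) (simp_all add: hole_form_def is_linear_def)
next
  case (Op v)
  then show ?case using hole_form_ctx_letters[of v lam] by (simp add: hole_form_dpoly)
qed

lemma is_linear_ctx_word: "star_word u \<Longrightarrow> is_linear (\<lambda>p. ctx_word lam p u)"
  using hole_form_ctx_letters[OF hole_form_ctx_letter, of u lam] by (simp add: star_word_def hole_form_def)

text \<open>Consequently \<open>nf(u|\<^sub>s) = 0\<close> whenever \<open>nf(s) = 0\<close>.\<close>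
lemma nf_subst_poly:
  assumes "star_word u"
  shows "nf lam (subst_poly u s) = ctx_word lam (nf lam s) u"
proof -
  have "nf lam (subst_poly u s) = lin (\<lambda>w. nf lam (mono (subst u w))) s"
    unfolding subst_poly_eq_lin by (rule lin_compose[OF is_linear_nf])
  also have "\<dots> = lin (\<lambda>w. ctx_word lam (nf_word lam w) u) s"
    by (simp add: nf_mono nf_word_subst)
  also have "\<dots> = ctx_word lam (nf lam s) u"
    unfolding nf_def by (rule lin_compose[OF is_linear_ctx_word[OF assms], symmetric])
  finally show ?thesis .
qed

lemma nf_Id: "f \<in> Id_set (S_diff lam) \<Longrightarrow> nf lam f = 0"
proof (induction rule: Id_set.induct)
  case (id_gen u s)
  then show ?case
    by (simp add: nf_subst_poly nf_S_diff linear_zero[OF is_linear_ctx_word])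
qed (simp_all add: nf_add nf_smult linear_zero[OF is_linear_nf])

definition Dwords :: "'a letter list set" where
  "Dwords = {w. \<forall>l\<in>set w. Dpow l}"

lemma SDomega_iff_Dwords: "w \<in> SDomega \<longleftrightarrow> w \<in> Dwords \<and> w \<noteq> []"
  by (auto simp: SDomega_def Dwords_def)

lemma keys_mult_subset:
  assumes "Poly_Mapping.keys p \<subseteq> A" "Poly_Mapping.keys q \<subseteq> B" "\<And>a b. a \<in> A \<Longrightarrow> b \<in> B \<Longrightarrow> a @ b \<in> C"
  shows "Poly_Mapping.keys (p * q :: ('a, 'k::comm_ring_1) opoly) \<subseteq> C"
  using keys_mult[of p q] assms by (fastforce simp: plus_list_def)

lemma keys_dword: "w \<in> Dwords \<Longrightarrow> Poly_Mapping.keys (dword lam w) \<subseteq> SDomega"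
proof (induction w)
  case Nil
  then show ?case by simp
next
  case (Cons l w)
  then have l: "Dpow l" "Dpow (Op [l])" and w: "w \<in> Dwords"
    by (auto simp: Dwords_def intro: Dpow.intros)
  with Cons.IH have IH: "Poly_Mapping.keys (dword lam w) \<subseteq> SDomega" by blast
  have left: "Poly_Mapping.keys (mono [l'] * dword lam w) \<subseteq> SDomega" if "Dpow l'" for l'
    by (rule keys_mult_subset[OF _ IH]) (use that in \<open>auto simp: keys_mono SDomega_def\<close>)
  have "Poly_Mapping.keys (mono [Op [l]] * mono w :: ('a, 'b) opoly) \<subseteq> SDomega"
    using l w by (simp add: mono_mult keys_mono SDomega_iff_Dwords Dwords_def)
  then show ?case
    unfolding dword.simps
    by (intro subset_trans[OF keys_add] Un_least left l subset_trans[OF keys_smult])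
qed

lemma keys_dpoly: "Poly_Mapping.keys p \<subseteq> Dwords \<Longrightarrow> Poly_Mapping.keys (dpoly lam p) \<subseteq> SDomega"
  unfolding dpoly_def using keys_lin[of "dword lam" p] keys_dword by blast

lemma
  fixes lam lam' :: "'k::comm_ring_1" and l :: "'a letter" and w :: "'a letter list"
  shows keys_nf_letter: "Poly_Mapping.keys (nf_letter lam l) \<subseteq> SDomega"
  and keys_nf_word:
    "Poly_Mapping.keys (nf_word lam' w) \<subseteq> Dwords \<and> (w \<noteq> [] \<longrightarrow> Poly_Mapping.keys (nf_word lam' w) \<subseteq> SDomega)"
proof (induction lam l and lam' w rule: nf_letter_nf_word.induct)
  case (1 lam x)
  then show ?case by (simp add: keys_mono SDomega_def Dpow.intros)
next
  case (2 lam v)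
  then show ?case by (simp add: keys_dpoly)
next
  case (3 lam)
  then show ?case by (simp add: Dwords_def keys_mono flip: mono_Nil)
next
  case (4 lam l w)
  have "Poly_Mapping.keys (nf_letter lam l * nf_word lam w) \<subseteq> SDomega"
    using 4 by (intro keys_mult_subset[where A = SDomega and B = Dwords]) (auto simp: SDomega_def Dwords_def)
  then show ?case by (auto simp: SDomega_iff_Dwords)
qed

lemma keys_nf:
  assumes "is_opoly f"
  shows "Poly_Mapping.keys (nf lam f) \<subseteq> SDomega"
proof -
  have "Poly_Mapping.keys (nf lam f) \<subseteq> (\<Union>w\<in>Poly_Mapping.keys f. Poly_Mapping.keys (nf_word lam w))"
    unfolding nf_def by (rule keys_lin)
  also have "\<dots> \<subseteq> SDomega"
    using assms keys_nf_word by (fastforce simp: is_opoly_def wf_word_def)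
  finally show ?thesis .
qed

lemma nf_letter_Dpow: "Dpow l \<Longrightarrow> nf_letter lam l = mono [l]"
  by (induction rule: Dpow.induct) (simp_all add: dpoly_mono mono_Nil)

lemma nf_word_Dwords: "w \<in> Dwords \<Longrightarrow> nf_word lam w = mono w"
  by (induction w) (simp_all add: Dwords_def nf_letter_Dpow mono_Nil mono_mult)

lemma nf_SDomega:
  assumes "Poly_Mapping.keys g \<subseteq> SDomega"
  shows "nf lam g = g"
proof -
  have "nf lam g = lin mono g"
    unfolding nf_def by (rule lin_cong) (use assms in \<open>auto simp: SDomega_iff_Dwords nf_word_Dwords\<close>)
  then show ?thesis by (simp add: lin_mono_id)
qed

lemma Id_sum: "(\<And>a. a \<in> A \<Longrightarrow> g a \<in> Id_set S) \<Longrightarrow> (\<Sum>a\<in>A. g a) \<in> Id_set S"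
  by (induction A rule: infinite_finite_induct) (auto intro: Id_set.intros)

lemma Id_lin: "(\<And>w. w \<in> Poly_Mapping.keys q \<Longrightarrow> F w \<in> Id_set S) \<Longrightarrow> lin F q \<in> Id_set S"
  unfolding lin_def by (intro Id_sum Id_set.id_smult) auto

text \<open>Ordinary words embed as star-free star words; this lets us put a star word into a context.\<close>
fun lift_letter :: "'a letter \<Rightarrow> 'a option letter" where
  "lift_letter (Var x) = Var (Some x)"
| "lift_letter (Op v) = Op (map lift_letter v)"

lemma lift_letter_props:
  "subst_letter w (lift_letter l) = [l] \<and> star_count_letter (lift_letter l) = 0
    \<and> wf_letter (lift_letter l) = wf_letter l"
proof (induction l)
  case (Op v)
  then show ?case by (induction v) auto
qed simp

lemma subst_lift: "concat (map (subst_letter w) (map lift_letter a)) = a"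
  and star_count_lift: "sum_list (map star_count_letter (map lift_letter a)) = 0"
  by (induction a) (simp_all add: lift_letter_props)

definition wf_letters :: "'a letter list \<Rightarrow> bool" where
  "wf_letters w \<longleftrightarrow> (\<forall>l\<in>set w. wf_letter l)"

lemma star_word_ctx:
  assumes "star_word u" "wf_letters a" "wf_letters b"
  shows "star_word (map lift_letter a @ u @ map lift_letter b)"
    and "subst (map lift_letter a @ u @ map lift_letter b) w = a @ subst u w @ b"
  using assms
  by (auto simp: star_word_def wf_word_def wf_letters_def lift_letter_props star_count_lift subst_def
      subst_lift simp flip: map_map)

lemma star_word_Op:
  assumes "star_word u"
  shows "star_word [Op u]" and "subst [Op u] w = [Op (subst u w)]"
  using assms by (auto simp: star_word_def wf_word_def subst_def)

lemma star_word_hole: "star_word [Var None]" and subst_hole: "subst [Var None] w = w"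
  by (simp_all add: star_word_def wf_word_def subst_def)

lemma S_subset_Id: "s \<in> S \<Longrightarrow> s \<in> Id_set S"
  using Id_set.id_gen[OF star_word_hole, of s S]
  by (simp add: subst_poly_eq_lin subst_hole lin_mono_id)

lemma Id_ctx:
  assumes "f \<in> Id_set S" "wf_letters a" "wf_letters b"
  shows "mono a * f * mono b \<in> Id_set S"
  using assms(1)
proof (induction rule: Id_set.induct)
  case (id_gen u s)
  have "is_linear (\<lambda>p. mono a * p * mono b :: ('a, 'k::comm_ring_1) opoly)"
    by (simp add: is_linear_def distrib_left distrib_right smult_mult_left smult_mult_right)
  then have "mono a * subst_poly u s * mono b = lin (\<lambda>w. mono a * mono (subst u w) * mono b) s"
    unfolding subst_poly_eq_lin by (rule lin_compose)
  also have "\<dots> = subst_poly (map lift_letter a @ u @ map lift_letter b) s"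
    unfolding subst_poly_eq_lin using star_word_ctx(2)[OF id_gen(1) assms(2,3)] by (simp add: mono_mult)
  finally show ?case
    using star_word_ctx(1)[OF id_gen(1) assms(2,3)] id_gen(2) by (simp add: Id_set.id_gen)
qed (simp_all add: distrib_left distrib_right smult_mult_left smult_mult_right Id_set.intros)

lemma Id_pD:
  assumes "f \<in> Id_set S"
  shows "pD f \<in> Id_set S"
  using assms
proof (induction rule: Id_set.induct)
  case (id_gen u s)
  have "pD (subst_poly u s) = lin (\<lambda>w. pD (mono (subst u w))) s"
    unfolding subst_poly_eq_lin by (rule lin_compose[OF is_linear_pD])
  also have "\<dots> = subst_poly [Op u] s"
    unfolding subst_poly_eq_lin using star_word_Op(2)[OF id_gen(1)] by (simp add: pD_mono)
  finally show ?case using star_word_Op(1)[OF id_gen(1)] id_gen(2) by (simp add: Id_set.id_gen)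
qed (simp_all add: linear_zero[OF is_linear_pD] linear_add[OF is_linear_pD]
      linear_smult[OF is_linear_pD] Id_set.intros)

lemma Id_mult_left:
  assumes "f \<in> Id_set S" "\<forall>k\<in>Poly_Mapping.keys q. wf_letters k"
  shows "q * f \<in> Id_set S"
proof -
  have "q * f = lin (\<lambda>k. mono k * f * mono []) q"
    by (subst linear_eq_lin[of "\<lambda>q. q * f"])
      (simp_all add: is_linear_def distrib_right smult_mult_left mono_Nil)
  also have "\<dots> \<in> Id_set S"
    using assms by (intro Id_lin Id_ctx) (auto simp: wf_letters_def)
  finally show ?thesis .
qed

lemma Id_mult_right:
  assumes "f \<in> Id_set S" "\<forall>k\<in>Poly_Mapping.keys q. wf_letters k"
  shows "f * q \<in> Id_set S"
proof -
  have "f * q = lin (\<lambda>k. mono [] * f * mono k) q"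
    by (subst linear_eq_lin[of "\<lambda>q. f * q"])
      (simp_all add: is_linear_def distrib_left smult_mult_right mono_Nil)
  also have "\<dots> \<in> Id_set S"
    using assms by (intro Id_lin Id_ctx) (auto simp: wf_letters_def)
  finally show ?thesis .
qed

section \<open>Every element is congruent to its normal form modulo \<open>Id(S)\<close>\<close>

definition leibniz_rel :: "'k::comm_ring_1 \<Rightarrow> 'a letter list \<Rightarrow> 'a letter list \<Rightarrow> ('a, 'k) opoly" where
  "leibniz_rel lam x y =
     mono [Op (x @ y)] - mono (Op x # y) - mono (x @ [Op y]) - smult lam (mono [Op x, Op y])"

lemma S_diff_eq: "S_diff lam = {leibniz_rel lam x y | x y. wf_word x \<and> wf_word y}"
  by (simp add: S_diff_def leibniz_rel_def pmul_eq_mult pD_mono mono_mult)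

lemma Dpow_wf: "Dpow l \<Longrightarrow> wf_letter l"
  by (induction rule: Dpow.induct) auto

lemma Op_minus_dword_Id:
  "w \<in> Dwords \<Longrightarrow> w \<noteq> [] \<Longrightarrow> mono [Op w] - dword lam w \<in> Id_set (S_diff lam)"
proof (induction w)
  case Nil
  then show ?case by simp
next
  case (Cons l r)
  then have l: "wf_letter l" and r: "r \<in> Dwords" by (auto simp: Dwords_def Dpow_wf)
  show ?case
  proof (cases "r = []")
    case True
    then show ?thesis by (simp add: mono_Nil Id_set.id_zero)
  next
    case False
    let ?E = "mono [Op r] - dword lam r"
    have E: "?E \<in> Id_set (S_diff lam)" using Cons.IH r False by blast
    have "wf_word [l]" "wf_word r"
      using l False r Dpow_wf by (auto simp: wf_word_def Dwords_def)
    then have rel: "leibniz_rel lam [l] r \<in> Id_set (S_diff lam)"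
      by (intro S_subset_Id) (auto simp: S_diff_eq)
    have ctx: "mono [l'] * ?E \<in> Id_set (S_diff lam)" if "wf_letter l'" for l'
      using Id_ctx[OF E, of "[l']" "[]"] that by (simp add: wf_letters_def mono_Nil)
    have "mono [Op (l # r)] - dword lam (l # r)
        = leibniz_rel lam [l] r + mono [l] * ?E + smult lam (mono [Op [l]] * ?E)"
      by (simp add: leibniz_rel_def mono_mult smult_diff smult_mult_right right_diff_distrib)
    also have "\<dots> \<in> Id_set (S_diff lam)"
      using l by (intro Id_set.id_add Id_set.id_smult rel ctx) auto
    finally show ?thesis .
  qed
qed

lemma pD_minus_dpoly_Id:
  assumes "Poly_Mapping.keys q \<subseteq> SDomega"
  shows "pD q - dpoly lam q \<in> Id_set (S_diff lam)"
proof -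
  have "pD q - dpoly lam q = lin (\<lambda>w. mono [Op w] - dword lam w) q"
    by (simp add: pD_eq_lin dpoly_def lin_fun_diff)
  also have "\<dots> \<in> Id_set (S_diff lam)"
    using assms by (intro Id_lin Op_minus_dword_Id) (auto simp: SDomega_iff_Dwords)
  finally show ?thesis .
qed

lemma nf_word_red:
  assumes "wf_letters w" "\<And>l. l \<in> set w \<Longrightarrow> mono [l] - nf_letter lam l \<in> Id_set (S_diff lam)"
  shows "mono w - nf_word lam w \<in> Id_set (S_diff lam)"
  using assms
proof (induction w)
  case Nil
  then show ?case by (simp add: mono_Nil Id_set.id_zero)
next
  case (Cons l r)
  then have IH: "mono r - nf_word lam r \<in> Id_set (S_diff lam)" and r: "wf_letters r"
    by (simp_all add: wf_letters_def)
  have nf_wf: "\<forall>k\<in>Poly_Mapping.keys (nf_letter lam l). wf_letters k"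
    using keys_nf_letter by (fastforce simp: SDomega_def wf_letters_def Dpow_wf)
  have "mono (l # r) - nf_word lam (l # r)
      = (mono [l] - nf_letter lam l) * mono r + nf_letter lam l * (mono r - nf_word lam r)"
    by (simp add: mono_mult algebra_simps)
  also have "\<dots> \<in> Id_set (S_diff lam)"
    using Cons.prems r by (intro Id_set.id_add Id_mult_right Id_mult_left[OF IH nf_wf]) (auto simp: keys_mono)
  finally show ?case .
qed

text \<open>A letter \<open>D(v)\<close> is congruent to \<open>D(nf v)\<close>, which is congruent to \<open>dpoly (nf v)\<close>.\<close>
lemma nf_letter_red: "wf_letter l \<Longrightarrow> mono [l] - nf_letter lam l \<in> Id_set (S_diff lam)"
proof (induction l)
  case (Var x)
  then show ?case by (simp add: Id_set.id_zero)
next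
  case (Op v)
  then have v: "v \<noteq> []" "wf_letters v" by (auto simp: wf_letters_def)
  have "mono [Op v] - nf_letter lam (Op v) = pD (mono v - nf_word lam v) + (pD (nf_word lam v) - dpoly lam (nf_word lam v))"
    by (simp add: linear_diff[OF is_linear_pD] pD_mono)
  also have "\<dots> \<in> Id_set (S_diff lam)"
    using v Op keys_nf_word[of lam v]
    by (intro Id_set.id_add Id_pD nf_word_red pD_minus_dpoly_Id) (auto simp: wf_letters_def)
  finally show ?case .
qed

lemma nf_red:
  assumes "is_opoly f"
  shows "f - nf lam f \<in> Id_set (S_diff lam)"
proof -
  have "f - nf lam f = lin (\<lambda>w. mono w - nf_word lam w) f"
    by (simp add: lin_fun_diff lin_mono_id nf_def)
  also have "\<dots> \<in> Id_set (S_diff lam)"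
    using assms by (intro Id_lin nf_word_red nf_letter_red)
      (auto simp: is_opoly_def wf_word_def wf_letters_def)
  finally show ?thesis .
qed

lemma deg_letter_pos: "wf_letter l \<Longrightarrow> 1 \<le> deg_letter l"
proof (induction l)
  case (Op v)
  then obtain a r where "v = a # r" "1 \<le> deg_letter a" by (cases v) auto
  then show ?case by simp
qed simp

lemma deg_word_pos: "wf_word w \<Longrightarrow> 1 \<le> deg_word w"
  by (cases w) (auto simp: wf_word_def deg_word_def dest: deg_letter_pos)

lemma word_less_deg: "word_less u v \<Longrightarrow> deg_word u \<le> deg_word v"
  by (induction rule: word_less.cases) auto

inductive_cases word_lessE: "word_less u v"
inductive_cases lex_less_ConsE: "lex_less (a # u) (b # v)"
inductive_cases letter_less_OpE: "letter_less (Op u) b"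

lemma Op_word_dominates:
  assumes deg: "deg_word (b # t) = deg_word z" and first: "deg_letter b < deg_word z"
  shows "word_less (b # t) [Op z]" and "\<not> word_less [Op z] (b # t)"
proof -
  have "letter_less b (Op z)"
  proof (cases b)
    case (Var x)
    then show ?thesis by (simp add: ll_var_op)
  next
    case (Op v)
    have "word_less v z" using first Op by (intro wl_deg) (simp add: deg_word_def)
    then show ?thesis unfolding Op by (rule ll_op)
  qed
  then show "word_less (b # t) [Op z]"
    using deg by (intro wl_lex lx_head) (auto simp: deg_word_def)
  show "\<not> word_less [Op z] (b # t)"
  proof
    assume "word_less [Op z] (b # t)"
    then have "lex_less [Op z] (b # t)" using deg by (auto elim!: word_lessE simp: deg_word_def)
    then show False
    proof (rule lex_less_ConsE)
      assume "letter_less (Op z) b"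
      then show False
        by (rule letter_less_OpE) (use first word_less_deg in \<open>fastforce simp: deg_word_def\<close>)
    next
      assume "b = Op z"
      then show False using first by (simp add: deg_word_def)
    qed
  qed
qed

lemma lead_eqI:
  assumes w: "w \<in> Poly_Mapping.keys s"
    and dominates: "\<And>v. v \<in> Poly_Mapping.keys s \<Longrightarrow> v \<noteq> w \<Longrightarrow> word_less v w \<and> \<not> word_less w v"
  shows "lead s = w"
  unfolding lead_def
proof (rule the_equality)
  show "w \<in> Poly_Mapping.keys s \<and> (\<forall>v\<in>Poly_Mapping.keys s. v \<noteq> w \<longrightarrow> word_less v w)"
    using w dominates by simp
  fix w' assume w': "w' \<in> Poly_Mapping.keys s \<and> (\<forall>v\<in>Poly_Mapping.keys s. v \<noteq> w' \<longrightarrow> word_less v w')"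
  show "w' = w"
  proof (rule ccontr)
    assume ne: "w' \<noteq> w"
    then have "word_less w w'" using w' w by simp
    moreover have "\<not> word_less w w'" using dominates[of w'] w' ne by simp
    ultimately show False by contradiction
  qed
qed

lemma deg_word_Nil: "deg_word [] = 0"
  and deg_word_Cons: "deg_word (l # w) = deg_letter l + deg_word w"
  and deg_word_append: "deg_word (u @ v) = deg_word u + deg_word v"
  by (simp_all add: deg_word_def)

text \<open>The leading word of the relation for \<open>x, y\<close> is \<open>D(xy)\<close>: the other three words have
  the same degree but start with a letter of smaller degree.\<close>
lemma lead_leibniz_rel:
  assumes x: "wf_word x" and y: "wf_word y"
  shows "lead (leibniz_rel lam x y) = [Op (x @ y)]"
proof (rule lead_eqI)
  let ?W = "[Op (x @ y)]" and ?s = "leibniz_rel lam x y"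
  obtain a x' where xa: "x = a # x'" using x by (cases x) (auto simp: wf_word_def)
  have deg_y: "1 \<le> deg_word y" by (rule deg_word_pos[OF y])
  then have deg_a: "deg_letter a < deg_word (x @ y)"
    using xa by (simp add: deg_word_Cons deg_word_append)
  have others: "Op x # y \<noteq> ?W" "x @ [Op y] \<noteq> ?W" "[Op x, Op y] \<noteq> ?W"
    using y xa by (auto simp: wf_word_def)
  have "Poly_Mapping.lookup ?s ?W = 1"
    using others by (simp add: leibniz_rel_def lookup_minus lookup_smult mono_def lookup_single when_def)
  then show "?W \<in> Poly_Mapping.keys ?s" by (simp add: in_keys_iff)
  fix v assume v: "v \<in> Poly_Mapping.keys ?s" "v \<noteq> ?W"
  have dominated: "word_less (b # t) ?W \<and> \<not> word_less ?W (b # t)"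
    if "deg_word (b # t) = deg_word (x @ y)" "deg_letter b < deg_word (x @ y)" for b t
    using Op_word_dominates[OF that] by blast
  have "Poly_Mapping.keys ?s \<subseteq> {?W, Op x # y, x @ [Op y], [Op x, Op y]}"
    unfolding leibniz_rel_def using keys_smult[of lam "mono [Op x, Op y] :: ('a, 'b) opoly"]
    by (auto simp: keys_mono dest!: subsetD[OF keys_diff])
  then consider "v = Op x # y" | "v = a # (x' @ [Op y])" | "v = [Op x, Op y]"
    using v xa by auto
  then show "word_less v ?W \<and> \<not> word_less ?W v"
  proof cases
    case 1
    then show ?thesis
      by simp (rule dominated; use deg_y in \<open>simp add: deg_word_Nil deg_word_Cons deg_word_append flip: deg_word_def\<close>)
  next
    case 2
    then show ?thesis
      by simp (rule dominated; use xa deg_a in \<open>simp add: deg_word_Nil deg_word_Cons deg_word_append flip: deg_word_def\<close>)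
  next
    case 3
    then show ?thesis
      by simp (rule dominated; use deg_y in \<open>simp add: deg_word_Nil deg_word_Cons deg_word_append flip: deg_word_def\<close>)
  qed
qed

section \<open>The irreducible words are \<open>S(D\<^sup>\<omega>(X))\<close>\<close>

lemma Irr_S_diff:
  "Irr (S_diff lam :: ('a::linorder, 'k::comm_ring_1) opoly set) =
     {w. wf_word w \<and> (\<forall>(u :: 'a option letter list) x y. star_word u \<longrightarrow> wf_word x \<longrightarrow> wf_word y
                           \<longrightarrow> w \<noteq> subst u [Op (x @ y)])}"
proof -
  have "(\<forall>(u :: 'a option letter list) s. star_word u \<longrightarrow> s \<in> S_diff lam \<longrightarrow> w \<noteq> subst u (lead s))
    \<longleftrightarrow> (\<forall>(u :: 'a option letter list) x y. star_word u \<longrightarrow> wf_word x \<longrightarrow> wf_word y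
           \<longrightarrow> w \<noteq> subst u [Op (x @ y)])" for w :: "'a letter list"
  proof
    assume irr: "\<forall>(u :: 'a option letter list) s. star_word u \<longrightarrow> s \<in> S_diff lam \<longrightarrow> w \<noteq> subst u (lead s)"
    show "\<forall>(u :: 'a option letter list) x y. star_word u \<longrightarrow> wf_word x \<longrightarrow> wf_word y \<longrightarrow> w \<noteq> subst u [Op (x @ y)]"
    proof (intro allI impI)
      fix u :: "'a option letter list" and x y :: "'a letter list"
      assume "star_word u" "wf_word x" "wf_word y"
      then show "w \<noteq> subst u [Op (x @ y)]"
        using irr[rule_format, of u "leibniz_rel lam x y"] by (auto simp: S_diff_eq lead_leibniz_rel)
    qed
  next
    assume irr: "\<forall>(u :: 'a option letter list) x y. star_word u \<longrightarrow> wf_word x \<longrightarrow> wf_word y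
                   \<longrightarrow> w \<noteq> subst u [Op (x @ y)]"
    show "\<forall>(u :: 'a option letter list) s. star_word u \<longrightarrow> s \<in> S_diff lam \<longrightarrow> w \<noteq> subst u (lead s)"
    proof (intro allI impI)
      fix u :: "'a option letter list" and s :: "('a, 'k) opoly"
      assume u: "star_word u" and "s \<in> S_diff lam"
      then obtain x y where "s = leibniz_rel lam x y" "wf_word x" "wf_word y" by (auto simp: S_diff_eq)
      then show "w \<noteq> subst u (lead s)" using irr u by (simp add: lead_leibniz_rel)
    qed
  qed
  then show ?thesis by (simp add: Irr_def)
qed

fun branching :: "'a letter \<Rightarrow> bool" where
  "branching (Var x) = False"
| "branching (Op v) = (2 \<le> length v \<or> (\<exists>l\<in>set v. branching l))"

lemma Dpow_iff_not_branching: "wf_letter l \<Longrightarrow> Dpow l \<longleftrightarrow> \<not> branching l"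
proof (induction l)
  case (Var x)
  then show ?case by (simp add: Dpow.intros)
next
  case (Op v)
  show ?case
  proof
    assume "Dpow (Op v)"
    then show "\<not> branching (Op v)"
      by (induction "Op v" arbitrary: v rule: Dpow.induct) (auto elim: Dpow.cases)
  next
    assume "\<not> branching (Op v)"
    then obtain l where "v = [l]" "\<not> branching l" using Op.prems by (cases v) (auto simp: Suc_le_eq)
    then show "Dpow (Op v)" using Op by (auto intro: Dpow.intros)
  qed
qed

lemma sum_list_pos: "1 \<le> sum_list (map f xs) \<Longrightarrow> \<exists>x\<in>set xs. (1::nat) \<le> f x"
  by (induction xs) (auto simp: Suc_le_eq)

lemma branching_subst_letter:
  assumes "\<exists>b\<in>set c. branching b"
  shows "1 \<le> star_count_letter l \<Longrightarrow> \<exists>b\<in>set (subst_letter c l). branching b"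
proof (induction l)
  case (Var x)
  then show ?case using assms by (cases x) auto
next
  case (Op v)
  then obtain l' where "l' \<in> set v" "1 \<le> star_count_letter l'"
    using sum_list_pos[of star_count_letter v] by auto
  then show ?case using Op by fastforce
qed

lemma branching_subst:
  assumes "star_word u" "\<exists>b\<in>set c. branching b"
  shows "\<exists>b\<in>set (subst u c). branching b"
proof -
  obtain l where "l \<in> set u" "1 \<le> star_count_letter l"
    using assms(1) sum_list_pos[of star_count_letter u] by (auto simp: star_word_def)
  then show ?thesis using branching_subst_letter[OF assms(2)] by (fastforce simp: subst_def)
qed

lemma branching_decomp:
  "wf_letter l \<Longrightarrow> branching l \<Longrightarrow>
    \<exists>u x y. star_word u \<and> wf_word x \<and> wf_word y \<and> [l] = subst u [Op (x @ y)]"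
proof (induction l)
  case (Var x)
  then show ?case by simp
next
  case (Op v)
  show ?case
  proof (cases "2 \<le> length v")
    case True
    then obtain a r where v: "v = a # r" "r \<noteq> []" by (cases v) (auto simp: Suc_le_eq)
    then have "wf_word [a]" "wf_word r" "[Op v] = subst [Var None] [Op ([a] @ r)]"
      using Op.prems by (auto simp: wf_word_def subst_hole)
    then show ?thesis using star_word_hole by blast
  next
    case False
    then obtain l' where v: "v = [l']" using Op.prems by (cases v) (auto simp: Suc_le_eq)
    then obtain u x y where "star_word u" "wf_word x" "wf_word y" "[l'] = subst u [Op (x @ y)]"
      using Op False by auto
    then show ?thesis using v star_word_Op[of u] by metis
  qed
qed

lemma Irr_S_diff_eq_SDomega: "Irr (S_diff lam :: ('a::linorder, 'k::comm_ring_1) opoly set) = SDomega"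
proof (intro set_eqI iffI)
  fix w assume "w \<in> Irr (S_diff lam :: ('a, 'k) opoly set)"
  then have w: "wf_word w"
    and irr: "\<And>u x y. star_word u \<Longrightarrow> wf_word x \<Longrightarrow> wf_word y \<Longrightarrow> w \<noteq> subst u [Op (x @ y)]"
    unfolding Irr_S_diff by auto
  have "Dpow l" if lw: "l \<in> set w" for l
  proof (rule ccontr)
    assume "\<not> Dpow l"
    moreover have wl: "wf_letter l" using w lw by (simp add: wf_word_def)
    ultimately obtain u x y where u: "star_word u" "wf_word x" "wf_word y" "[l] = subst u [Op (x @ y)]"
      using branching_decomp Dpow_iff_not_branching by blast
    obtain pre post where w_split: "w = pre @ l # post" using split_list[OF lw] by blast
    then have "wf_letters pre" "wf_letters post" using w by (auto simp: wf_word_def wf_letters_def)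
    then have "w = subst (map lift_letter pre @ u @ map lift_letter post) [Op (x @ y)]"
      and "star_word (map lift_letter pre @ u @ map lift_letter post)"
      using star_word_ctx[OF u(1)] w_split by (simp_all flip: u(4))
    then show False using irr u(2,3) by blast
  qed
  then show "w \<in> SDomega" using w by (auto simp: SDomega_def wf_word_def)
next
  fix w :: "'a letter list" assume w: "w \<in> SDomega"
  have "w \<noteq> subst u [Op (x @ y)]" if u: "star_word u" and xy: "wf_word x" "wf_word y" for u x y
  proof
    assume e: "w = subst u [Op (x @ y)]"
    have "2 \<le> length (x @ y)" using xy by (cases x; cases y) (auto simp: wf_word_def)
    then have "\<exists>b\<in>set [Op (x @ y)]. branching b" by simp
    then obtain b where "b \<in> set w" "branching b" using branching_subst[OF u] e by blast
    then show False using w Dpow_iff_not_branching Dpow_wf by (auto simp: SDomega_def)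
  qed
  moreover have "wf_word w" using w Dpow_wf by (auto simp: SDomega_def wf_word_def)
  ultimately show "w \<in> Irr (S_diff lam :: ('a, 'k) opoly set)" unfolding Irr_S_diff by blast
qed

theorem theorem5p4:
  fixes lam :: "'k::comm_ring_1"
  defines "S \<equiv> (S_diff lam :: ('a::wellorder, 'k) opoly set)"
  shows "Irr S = SDomega
    \<and> (\<forall>f. is_opoly f \<longrightarrow> (\<exists>g. Poly_Mapping.keys g \<subseteq> Irr S \<and> f - g \<in> Id_set S))
    \<and> (\<forall>g. Poly_Mapping.keys g \<subseteq> Irr S \<longrightarrow> g \<in> Id_set S \<longrightarrow> g = 0)"
proof (intro conjI allI impI)
  show Irr: "Irr S = SDomega"
    unfolding S_def by (rule Irr_S_diff_eq_SDomega)
  fix f :: "('a, 'k) opoly"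
  assume f: "is_opoly f"
  have "Poly_Mapping.keys (nf lam f) \<subseteq> Irr S" using keys_nf[OF f] Irr by simp
  moreover have "f - nf lam f \<in> Id_set S" unfolding S_def by (rule nf_red[OF f])
  ultimately show "\<exists>g. Poly_Mapping.keys g \<subseteq> Irr S \<and> f - g \<in> Id_set S" by blast
next
  fix g :: "('a, 'k) opoly"
  assume "Poly_Mapping.keys g \<subseteq> Irr S" and "g \<in> Id_set S"
  then have "nf lam g = g" and "nf lam g = 0"
    using nf_SDomega nf_Id Irr_S_diff_eq_SDomega unfolding S_def by blast+
  then show "g = 0" by simp
qed

end
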